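(* Let $(M,\rho)$ be a metric space, $f:[a,b]\to M$ arbitrary, and $E=\{x\in[a,b]: md(f,x)\text{ exists and } md(f,x)=0\}$. Then $\mathcal H^1(f(E))=0$.
   Context: $md(f,x)=\lim_{t\to0,\ x+t\in[a,b]}\rho(f(x+t),f(x))/|t|$ when it exists. $\mathcal H^1$ is one-dimensional Hausdorff measure on $M$. *)

theory Defs
  imports "HOL-Analysis.Analysis"
begin

definition has_metric_derivative ::
  "(real \<Rightarrow> 'a::metric_space) \<Rightarrow> real \<Rightarrow> real \<Rightarrow> real \<Rightarrow> real \<Rightarrow> bool" where
  "has_metric_derivative f a b x L \<longleftrightarrow>
     ((\<lambda>t. dist (f (x + t)) (f x) / \<bar>t\<bar>) \<longlongrightarrow> L) (at 0 within {t. x + t \<in> {a..b}})"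

definition hausdorff1_approx :: "real \<Rightarrow> 'a::metric_space set \<Rightarrow> ennreal" where
  "hausdorff1_approx \<delta> A =
     (INF C \<in> {C :: nat \<Rightarrow> 'a set. A \<subseteq> (\<Union>i. C i) \<and>
                  (\<forall>i. bounded (C i) \<and> diameter (C i) \<le> \<delta>)}.
        (\<Sum>i. ennreal (diameter (C i))))"

definition hausdorff1 :: "'a::metric_space set \<Rightarrow> ennreal" where
  "hausdorff1 A = (SUP \<delta> \<in> {0<..}. hausdorff1_approx \<delta> A)"

end

theory Submission
  imports Defs
begin

text \<open>If \<open>md(f,x) = 0\<close> then for every \<open>\<epsilon> > 0\<close> the map \<open>f\<close> is \<open>\<epsilon>\<close>-Lipschitz at \<open>x\<close> on a
  small neighbourhood, so \<open>x\<close> lies in a dyadic interval \<open>J\<close> with \<open>diam f(E \<inter> J) \<le> 2\<epsilon>|J|\<close>.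
  The maximal dyadic intervals with this property are pairwise disjoint and lie in \<open>[a-1,b+1]\<close>,
  so they yield covers of \<open>f(E)\<close> by sets of arbitrarily small diameter whose diameters sum
  to at most \<open>2\<epsilon>(b - a + 2)\<close>; let \<open>\<epsilon> \<rightarrow> 0\<close>.\<close>

lemma diameter_le_of_subset_cball:
  fixes S :: "'a::metric_space set"
  assumes "S \<subseteq> cball c r" "0 \<le> r"
  shows "diameter S \<le> 2 * r"
proof (cases "S = {}")
  case True
  then show ?thesis
    using assms by simp
next
  case False
  have "dist x y \<le> 2 * r" if "x \<in> S" "y \<in> S" for x y
  proof -
    have "dist x y \<le> dist c x + dist c y"
      by (simp add: dist_triangle3 dist_commute)
    also have "\<dots> \<le> 2 * r"
      using assms that by (smt (verit) mem_cball subsetD)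
    finally show ?thesis .
  qed
  then show ?thesis
    using False unfolding diameter_def by (auto intro!: cSUP_least)
qed

lemma image_pointwise_lipschitz_diameter_le:
  fixes f :: "real \<Rightarrow> 'a::metric_space"
  assumes "x \<in> S" "\<And>y. y \<in> S \<Longrightarrow> dist (f y) (f x) \<le> L * \<bar>y - x\<bar>"
    and "\<And>y. y \<in> S \<Longrightarrow> \<bar>y - x\<bar> \<le> r" "0 \<le> L"
  shows "bounded (f ` S)" "diameter (f ` S) \<le> 2 * L * r"
proof -
  have "dist (f x) (f y) \<le> L * r" if "y \<in> S" for y
    using assms(2) [OF that] mult_left_mono [OF assms(3) [OF that] assms(4)]
    by (simp add: dist_commute)
  then have sub: "f ` S \<subseteq> cball (f x) (L * r)"
    by auto
  show "bounded (f ` S)"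
    using sub bounded_cball bounded_subset by blast
  have "0 \<le> r"
    using assms(1,3) abs_ge_zero order_trans by blast
  then show "diameter (f ` S) \<le> 2 * L * r"
    using diameter_le_of_subset_cball [OF sub] assms(4) by simp
qed

lemma hausdorff1_approx_le_disjoint_cover:
  fixes C :: "'i::countable \<Rightarrow> 'a::metric_space set" and c :: ennreal
  assumes "A \<subseteq> (\<Union>i. C i)" "\<And>i. bounded (C i)" "\<And>i. diameter (C i) \<le> \<delta>" "0 \<le> \<delta>"
    and "\<And>i. ennreal (diameter (C i)) \<le> c * emeasure M (D i)"
    and "disjoint_family D" "\<And>i. D i \<in> sets M" "\<And>i. D i \<subseteq> S" "S \<in> sets M"
  shows "hausdorff1_approx \<delta> A \<le> c * emeasure M S"
proof -
  define C' where "C' n = (if n \<in> range (to_nat :: 'i \<Rightarrow> nat) then C (from_nat n) else {})" for n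
  define D' where "D' n = (if n \<in> range (to_nat :: 'i \<Rightarrow> nat) then D (from_nat n) else {})" for n
  have "A \<subseteq> (\<Union>n. C' n)"
  proof
    fix x assume "x \<in> A"
    then obtain i where "x \<in> C i"
      using assms(1) by blast
    then show "x \<in> (\<Union>n. C' n)"
      unfolding C'_def by (intro UN_I [of "to_nat i"]) auto
  qed
  then have "hausdorff1_approx \<delta> A \<le> (\<Sum>n. ennreal (diameter (C' n)))"
    unfolding hausdorff1_approx_def using assms(2-4) by (intro INF_lower) (auto simp: C'_def)
  also have "\<dots> \<le> (\<Sum>n. c * emeasure M (D' n))"
    using assms(5) by (intro suminf_le) (auto simp: C'_def D'_def)
  also have "\<dots> = c * emeasure M (\<Union>n. D' n)"
  proof -
    have "disjoint_family D'"
      using assms(6) unfolding disjoint_family_on_def D'_def by (auto simp: disjoint_iff)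
    then show ?thesis
      using assms(7) by (subst suminf_emeasure [symmetric]) (auto simp: D'_def ennreal_suminf_cmult)
  qed
  also have "\<dots> \<le> c * emeasure M S"
    using assms(8,9) by (intro mult_left_mono emeasure_mono) (auto simp: D'_def)
  finally show ?thesis .
qed

lemma hausdorff1_eq_0I:
  fixes c :: ennreal
  assumes "c < \<infinity>" "\<And>\<delta> \<epsilon>. 0 < \<delta> \<Longrightarrow> 0 < \<epsilon> \<Longrightarrow> hausdorff1_approx \<delta> A \<le> ennreal \<epsilon> * c"
  shows "hausdorff1 A = 0"
proof -
  obtain c' where c': "c = ennreal c'" "0 \<le> c'"
    using assms(1) by (cases c rule: ennreal_cases) auto
  have "hausdorff1_approx \<delta> A \<le> 0" if "0 < \<delta>" for \<delta>
  proof (rule ennreal_le_epsilon)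
    fix e :: real
    assume "0 < e"
    define \<epsilon> where "\<epsilon> = e / (c' + 1)"
    have "0 < \<epsilon>" "\<epsilon> * c' \<le> e"
      using \<open>0 < e\<close> c'(2) by (auto simp: \<epsilon>_def field_simps)
    have "hausdorff1_approx \<delta> A \<le> ennreal \<epsilon> * c"
      using assms(2) \<open>0 < \<delta>\<close> \<open>0 < \<epsilon>\<close> by blast
    also have "\<dots> \<le> ennreal e"
      using \<open>\<epsilon> * c' \<le> e\<close> \<open>0 < \<epsilon>\<close> c' by (auto simp: ennreal_mult [symmetric] intro: ennreal_leI)
    finally show "hausdorff1_approx \<delta> A \<le> 0 + ennreal e"
      by simp
  qed
  then show ?thesis
    unfolding hausdorff1_def by (simp add: SUP_least)
qed

definition dyadic_interval :: "nat \<Rightarrow> int \<Rightarrow> real set" where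
  "dyadic_interval k j = {of_int j / 2^k ..< (of_int j + 1) / 2^k}"

lemma mem_dyadic_interval_iff: "x \<in> dyadic_interval k j \<longleftrightarrow> \<lfloor>x * 2^k\<rfloor> = j"
  unfolding dyadic_interval_def floor_eq_iff by (simp add: divide_le_eq less_divide_eq)

lemma dyadic_interval_dist_le:
  assumes "x \<in> dyadic_interval k j" "y \<in> dyadic_interval k j"
  shows "\<bar>y - x\<bar> \<le> 1 / 2^k"
  using assms unfolding dyadic_interval_def
  by (auto simp: abs_le_iff diff_divide_distrib [symmetric] add_divide_distrib)

lemma emeasure_dyadic_interval: "emeasure lborel (dyadic_interval k j) = ennreal (1 / 2^k)"
  by (simp add: dyadic_interval_def diff_divide_distrib [symmetric] divide_right_mono)

lemma floor_mult_power2_div: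
  fixes x :: real
  assumes "k' \<le> k"
  shows "\<lfloor>x * 2^k\<rfloor> div 2^(k - k') = \<lfloor>x * 2^k'\<rfloor>"
proof -
  have "(2::real)^k = 2^k' * 2^(k - k')"
    using assms by (simp flip: power_add)
  then have "x * 2^k' = x * 2^k / of_int (2^(k - k'))"
    by simp
  then show ?thesis
    using floor_divide_real_eq_div [of "2^(k - k')" "x * 2^k"] by simp
qed

text \<open>\<open>j div 2^(k - k')\<close> indexes the ancestor of \<open>dyadic_interval k j\<close> at level \<open>k'\<close>.\<close>

definition maximal_dyadic :: "(nat \<Rightarrow> int \<Rightarrow> bool) \<Rightarrow> nat \<Rightarrow> int \<Rightarrow> bool" where
  "maximal_dyadic P k j \<longleftrightarrow> P k j \<and> (\<forall>k' < k. \<not> P k' (j div 2^(k - k')))"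

lemma maximal_dyadic_mono:
  fixes x :: real
  assumes "maximal_dyadic P k \<lfloor>x * 2^k\<rfloor>" "P k' \<lfloor>x * 2^k'\<rfloor>"
  shows "k \<le> k'"
  using assms floor_mult_power2_div [of k' k x] unfolding maximal_dyadic_def
  by (metis not_le order.strict_implies_order)

lemma ex_maximal_dyadic:
  fixes x :: real
  assumes "P k \<lfloor>x * 2^k\<rfloor>"
  shows "\<exists>m. maximal_dyadic P m \<lfloor>x * 2^m\<rfloor>"
proof -
  define m where "m = (LEAST k. P k \<lfloor>x * 2^k\<rfloor>)"
  have "P m \<lfloor>x * 2^m\<rfloor>"
    unfolding m_def using assms by (rule LeastI)
  moreover have "\<not> P k' (\<lfloor>x * 2^m\<rfloor> div 2^(m - k'))" if "k' < m" for k'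
    using not_less_Least [OF that [unfolded m_def]] floor_mult_power2_div [of k' m x] that
    by (simp add: m_def)
  ultimately show ?thesis
    unfolding maximal_dyadic_def by blast
qed

lemma maximal_dyadic_disjoint:
  assumes "maximal_dyadic P k j" "maximal_dyadic P k' j'" "(k, j) \<noteq> (k', j')"
  shows "dyadic_interval k j \<inter> dyadic_interval k' j' = {}"
proof (rule ccontr)
  assume "dyadic_interval k j \<inter> dyadic_interval k' j' \<noteq> {}"
  then obtain z :: real where "\<lfloor>z * 2^k\<rfloor> = j" "\<lfloor>z * 2^k'\<rfloor> = j'"
    unfolding mem_dyadic_interval_iff [symmetric] by blast
  with assms(1,2) have "k = k'"
    by (metis maximal_dyadic_def maximal_dyadic_mono order_antisym)
  then show False
    using assms(3) \<open>\<lfloor>z * 2^k\<rfloor> = j\<close> \<open>\<lfloor>z * 2^k'\<rfloor> = j'\<close> by simp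
qed

lemma hausdorff1_approx_le_dyadic_cover:
  fixes f :: "real \<Rightarrow> 'a::metric_space" and P :: "nat \<Rightarrow> int \<Rightarrow> bool"
  assumes cover: "\<And>x. x \<in> E \<Longrightarrow> \<exists>k. P k \<lfloor>x * 2^k\<rfloor>"
    and bound: "\<And>k j. P k j \<Longrightarrow> bounded (f ` (E \<inter> dyadic_interval k j))"
    and diam: "\<And>k j. P k j \<Longrightarrow> diameter (f ` (E \<inter> dyadic_interval k j)) \<le> c / 2^k"
    and small: "\<And>k j. P k j \<Longrightarrow> c / 2^k \<le> \<delta>"
    and sub: "\<And>k j. P k j \<Longrightarrow> dyadic_interval k j \<subseteq> S" "S \<in> sets lborel"
    and "0 \<le> c" "0 \<le> \<delta>"
  shows "hausdorff1_approx \<delta> (f ` E) \<le> ennreal c * emeasure lborel S"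
proof -
  define D where "D = (\<lambda>(k, j). if maximal_dyadic P k j then dyadic_interval k j else {})"
  define C where "C kj = f ` (E \<inter> D kj)" for kj
  have C_props: "bounded (C (k, j)) \<and> diameter (C (k, j)) \<le> \<delta> \<and>
      ennreal (diameter (C (k, j))) \<le> ennreal c * emeasure lborel (D (k, j))" for k j
  proof (cases "maximal_dyadic P k j")
    case True
    then have "P k j"
      unfolding maximal_dyadic_def by blast
    have "ennreal (diameter (C (k, j))) \<le> ennreal (c * (1 / 2^k))"
      using diam [OF \<open>P k j\<close>] True by (intro ennreal_leI) (simp add: C_def D_def)
    also have "\<dots> = ennreal c * emeasure lborel (D (k, j))"
      using True \<open>0 \<le> c\<close> ennreal_mult [of c "1 / 2^k"]
      by (simp add: D_def emeasure_dyadic_interval)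
    finally show ?thesis
      using True bound diam small \<open>P k j\<close> by (fastforce simp: C_def D_def)
  qed (simp add: C_def D_def \<open>0 \<le> \<delta>\<close>)
  have "f ` E \<subseteq> (\<Union>kj. C kj)"
  proof
    fix y assume "y \<in> f ` E"
    then obtain x where x: "x \<in> E" "y = f x"
      by auto
    obtain m where "maximal_dyadic P m \<lfloor>x * 2^m\<rfloor>"
      using cover [OF x(1)] ex_maximal_dyadic by blast
    then have "y \<in> C (m, \<lfloor>x * 2^m\<rfloor>)"
      using x unfolding C_def D_def by (simp add: mem_dyadic_interval_iff)
    then show "y \<in> (\<Union>kj. C kj)"
      by blast
  qed
  moreover have "disjoint_family D"
    unfolding disjoint_family_on_def D_def using maximal_dyadic_disjoint by (auto split: prod.splits)
  moreover have "D kj \<in> sets lborel" "D kj \<subseteq> S" for kj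
    using sub by (auto simp: D_def dyadic_interval_def maximal_dyadic_def split: prod.splits)
  ultimately show ?thesis
    using C_props sub(2) \<open>0 \<le> \<delta>\<close> by (intro hausdorff1_approx_le_disjoint_cover [where C = C and D = D]) auto
qed

lemma has_metric_derivative_zeroD:
  fixes f :: "real \<Rightarrow> 'a::metric_space"
  assumes "has_metric_derivative f a b x 0" "0 < \<epsilon>"
  shows "\<forall>\<^sub>F k in sequentially.
           \<forall>y\<in>{a..b}. \<bar>y - x\<bar> \<le> 1 / 2^k \<longrightarrow> dist (f y) (f x) \<le> \<epsilon> * \<bar>y - x\<bar>"
proof -
  have "\<forall>\<^sub>F t in at 0 within {t. x + t \<in> {a..b}}. dist (dist (f (x + t)) (f x) / \<bar>t\<bar>) 0 < \<epsilon>"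
    using assms tendstoD unfolding has_metric_derivative_def by blast
  then obtain d where "0 < d" and d: "\<And>t. x + t \<in> {a..b} \<Longrightarrow> t \<noteq> 0 \<Longrightarrow> \<bar>t\<bar> < d \<Longrightarrow>
      dist (f (x + t)) (f x) / \<bar>t\<bar> < \<epsilon>"
    unfolding eventually_at by (auto simp: dist_real_def)
  have lip: "dist (f y) (f x) \<le> \<epsilon> * \<bar>y - x\<bar>" if "y \<in> {a..b}" "\<bar>y - x\<bar> < d" for y
  proof (cases "y = x")
    case False
    then have "dist (f y) (f x) / \<bar>y - x\<bar> < \<epsilon>"
      using d [of "y - x"] that by simp
    with False show ?thesis
      by (simp add: divide_less_eq mult.commute less_imp_le)
  qed simp
  obtain N where "(1/2::real)^N < d"
    using real_arch_pow_inv [OF \<open>0 < d\<close>, of "1/2"] by auto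
  moreover have "(1/2::real)^k \<le> (1/2)^N" if "N \<le> k" for k
    using that by (rule power_decreasing) auto
  ultimately show ?thesis
    unfolding eventually_sequentially using lip by (force simp: power_one_over)
qed

lemma hausdorff1_approx_image_md_zero_le:
  fixes f :: "real \<Rightarrow> 'a::metric_space"
  assumes E: "E \<subseteq> {a..b}" "\<And>x. x \<in> E \<Longrightarrow> has_metric_derivative f a b x 0"
    and "0 < \<delta>" "0 < \<epsilon>"
  shows "hausdorff1_approx \<delta> (f ` E) \<le> ennreal \<epsilon> * (2 * emeasure lborel {a-1..b+1})"
proof -
  obtain k0 :: nat where k0: "2 * \<epsilon> / 2^k0 < \<delta>"
  proof -
    obtain n where "(1/2::real)^n < \<delta> / (2 * \<epsilon>)"
      using real_arch_pow_inv [of "\<delta> / (2 * \<epsilon>)" "1/2"] \<open>0 < \<delta>\<close> \<open>0 < \<epsilon>\<close> by auto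
    with that \<open>0 < \<epsilon>\<close> show ?thesis
      by (simp add: power_one_over field_simps)
  qed
  define lip where
    "lip k x \<longleftrightarrow> (\<forall>y\<in>{a..b}. \<bar>y - x\<bar> \<le> 1 / 2^k \<longrightarrow> dist (f y) (f x) \<le> \<epsilon> * \<bar>y - x\<bar>)"
    for k x
  define P where "P k j \<longleftrightarrow> k0 \<le> k \<and> (\<exists>x \<in> E \<inter> dyadic_interval k j. lip k x)" for k j
  have "hausdorff1_approx \<delta> (f ` E) \<le> ennreal (2 * \<epsilon>) * emeasure lborel {a-1..b+1}"
  proof (rule hausdorff1_approx_le_dyadic_cover [where P = P])
    show "\<exists>k. P k \<lfloor>x * 2^k\<rfloor>" if x: "x \<in> E" for x
    proof -
      obtain N where "\<And>k. N \<le> k \<Longrightarrow> lip k x"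
        using has_metric_derivative_zeroD [OF E(2) [OF x] \<open>0 < \<epsilon>\<close>]
        unfolding lip_def eventually_sequentially by blast
      then have "lip (max N k0) x"
        by simp
      then show ?thesis
        using x unfolding P_def by (intro exI [of _ "max N k0"]) (auto simp: mem_dyadic_interval_iff)
    qed
    fix k j assume "P k j"
    then obtain x where x: "x \<in> E \<inter> dyadic_interval k j" "lip k x" and "k0 \<le> k"
      unfolding P_def by blast
    have near: "\<bar>y - x\<bar> \<le> 1 / 2^k" if "y \<in> dyadic_interval k j" for y
      using x(1) that dyadic_interval_dist_le by blast
    have "dist (f y) (f x) \<le> \<epsilon> * \<bar>y - x\<bar>" if "y \<in> E \<inter> dyadic_interval k j" for y
      using x(2) near that E(1) unfolding lip_def by blast
    from image_pointwise_lipschitz_diameter_le [OF x(1) this near] \<open>0 < \<epsilon>\<close>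
    show "bounded (f ` (E \<inter> dyadic_interval k j))"
      and "diameter (f ` (E \<inter> dyadic_interval k j)) \<le> 2 * \<epsilon> / 2^k"
      by auto
    have "2 * \<epsilon> / 2^k \<le> 2 * \<epsilon> / 2^k0"
      using \<open>k0 \<le> k\<close> \<open>0 < \<epsilon>\<close> by (intro divide_left_mono) (auto intro: power_increasing)
    with k0 show "2 * \<epsilon> / 2^k \<le> \<delta>"
      by linarith
    have "\<bar>y - x\<bar> \<le> 1" if "y \<in> dyadic_interval k j" for y
      using near [OF that] order_trans [of _ "1 / 2^k" "1::real"] by simp
    with x(1) E(1) show "dyadic_interval k j \<subseteq> {a-1..b+1}"
      by (force simp: abs_le_iff)
  qed (use \<open>0 < \<delta>\<close> \<open>0 < \<epsilon>\<close> in auto)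
  then show ?thesis
    using \<open>0 < \<epsilon>\<close> by (simp add: ennreal_mult ac_simps)
qed

theorem theorem3p13:
  fixes f :: "real \<Rightarrow> 'a::metric_space" and a b :: real
  defines "E \<equiv> {x \<in> {a..b}. has_metric_derivative f a b x 0}"
  shows "hausdorff1 (f ` E) = 0"
proof (rule hausdorff1_eq_0I)
  show "2 * emeasure lborel {a-1..b+1} < \<infinity>"
    by (simp add: emeasure_lborel_Icc_eq ennreal_mult_less_top)
  fix \<delta> \<epsilon> :: real
  assume "0 < \<delta>" "0 < \<epsilon>"
  then show "hausdorff1_approx \<delta> (f ` E) \<le> ennreal \<epsilon> * (2 * emeasure lborel {a-1..b+1})"
    by (intro hausdorff1_approx_image_md_zero_le) (auto simp: E_def)
qed

end
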